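(* Consider $CP(N)$ with rates $\psi(i,j)=2ij$ started from $(N,0,\dots,0)$, and let $n_{k,N}(t)$ be the number of clusters of size $k$ at time $t$. Then for every fixed $t>0$ and fixed $k,l$ with $k\neq l$, as $N\to\infty$: $\mathbb E\,n_{k,N}(t)\to0$, $\operatorname{Var} n_{k,N}(t)\to0$ and $\operatorname{cov}(n_{k,N}(t),n_{l,N}(t))\to0$; while $\mathbb E\,n_{N,N}(t)\to1$, so the probability $p_{coag,N}(t)$ of a single cluster of size $N$ at time $t$ tends to $1$ as $N\to\infty$.
   Context: $CP(N)$ is the continuous-time Markov chain on partitions $\eta=(n_1,\dots,n_N)$ of $N$ ($n_k$ = number of clusters of size $k$, $\sum kn_k=N$) in which any two distinct clusters of sizes $i,j$ merge into one of size $i+j$ at rate $\psi(i,j)$; the transition $\eta\to\eta^{(i,j)}$ has rate $n_in_j\psi(i,j)$ for $i\ne j$ and $\frac{n_i(n_i-1)}2\psi(i,i)$ for $i=j$. *)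

theory Defs
  imports Complex_Main
begin

text \<open>A state of CP(N): eta k = number of clusters of size k, k = 1..N, sum k * eta k = N.\<close>
definition parts :: "nat \<Rightarrow> (nat \<Rightarrow> nat) set" where
  "parts N = {eta. (\<forall>k. eta k \<noteq> 0 \<longrightarrow> 1 \<le> k \<and> k \<le> N) \<and> (\<Sum>k=1..N. k * eta k) = N}"

definition merge :: "(nat \<Rightarrow> nat) \<Rightarrow> nat \<Rightarrow> nat \<Rightarrow> (nat \<Rightarrow> nat)" where
  "merge eta i j =
     (let e1 = eta(i := eta i - 1); e2 = e1(j := e1 j - 1) in e2(i + j := e2 (i + j) + 1))"

definition pair_rate :: "(nat \<Rightarrow> nat \<Rightarrow> real) \<Rightarrow> (nat \<Rightarrow> nat) \<Rightarrow> nat \<Rightarrow> nat \<Rightarrow> real" where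
  "pair_rate psi eta i j =
     (if i = j then real (eta i) * (real (eta i) - 1) / 2 * psi i i
      else real (eta i) * real (eta j) * psi i j)"

definition Qoff :: "(nat \<Rightarrow> nat \<Rightarrow> real) \<Rightarrow> nat \<Rightarrow> (nat \<Rightarrow> nat) \<Rightarrow> (nat \<Rightarrow> nat) \<Rightarrow> real" where
  "Qoff psi N eta eta' =
     (\<Sum>(i, j) \<in> (SIGMA i:{1..N}. {i..N}). if merge eta i j = eta' then pair_rate psi eta i j else 0)"

definition Qgen :: "(nat \<Rightarrow> nat \<Rightarrow> real) \<Rightarrow> nat \<Rightarrow> (nat \<Rightarrow> nat) \<Rightarrow> (nat \<Rightarrow> nat) \<Rightarrow> real" where
  "Qgen psi N eta eta' =
     (if eta = eta' then - (\<Sum>e \<in> parts N - {eta}. Qoff psi N eta e) else Qoff psi N eta eta')"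

fun Qpow :: "(nat \<Rightarrow> nat \<Rightarrow> real) \<Rightarrow> nat \<Rightarrow> nat \<Rightarrow> (nat \<Rightarrow> nat) \<Rightarrow> (nat \<Rightarrow> nat) \<Rightarrow> real" where
  "Qpow psi N 0 eta eta' = (if eta = eta' then 1 else 0)"
| "Qpow psi N (Suc m) eta eta' = (\<Sum>e \<in> parts N. Qpow psi N m eta e * Qgen psi N e eta')"

definition Ptrans :: "(nat \<Rightarrow> nat \<Rightarrow> real) \<Rightarrow> nat \<Rightarrow> real \<Rightarrow> (nat \<Rightarrow> nat) \<Rightarrow> (nat \<Rightarrow> nat) \<Rightarrow> real" where
  "Ptrans psi N t eta eta' = (\<Sum>m. t ^ m / fact m * Qpow psi N m eta eta')"

definition monomers :: "nat \<Rightarrow> (nat \<Rightarrow> nat)" where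
  "monomers N = (\<lambda>k. if k = 1 then N else 0)"

definition single_cluster :: "nat \<Rightarrow> (nat \<Rightarrow> nat)" where
  "single_cluster N = (\<lambda>k. if k = N then 1 else 0)"

definition distCP :: "(nat \<Rightarrow> nat \<Rightarrow> real) \<Rightarrow> nat \<Rightarrow> real \<Rightarrow> (nat \<Rightarrow> nat) \<Rightarrow> real" where
  "distCP psi N t eta = Ptrans psi N t (monomers N) eta"

definition mean_n :: "(nat \<Rightarrow> nat \<Rightarrow> real) \<Rightarrow> nat \<Rightarrow> real \<Rightarrow> nat \<Rightarrow> real" where
  "mean_n psi N t k = (\<Sum>eta \<in> parts N. distCP psi N t eta * real (eta k))"

definition cov_n :: "(nat \<Rightarrow> nat \<Rightarrow> real) \<Rightarrow> nat \<Rightarrow> real \<Rightarrow> nat \<Rightarrow> nat \<Rightarrow> real" where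
  "cov_n psi N t k l = (\<Sum>eta \<in> parts N. distCP psi N t eta * real (eta k) * real (eta l))
                        - mean_n psi N t k * mean_n psi N t l"

definition var_n :: "(nat \<Rightarrow> nat \<Rightarrow> real) \<Rightarrow> nat \<Rightarrow> real \<Rightarrow> nat \<Rightarrow> real" where
  "var_n psi N t k = cov_n psi N t k k"

definition p_coag :: "(nat \<Rightarrow> nat \<Rightarrow> real) \<Rightarrow> nat \<Rightarrow> real \<Rightarrow> real" where
  "p_coag psi N t = distCP psi N t (single_cluster N)"

definition psi_mult :: "nat \<Rightarrow> nat \<Rightarrow> real" where
  "psi_mult i j = 2 * real i * real j"

end

theory Submission
  imports Defs "HOL-Real_Asymp.Real_Asymp"
begin

(*
  Let V(eta) = (number of clusters of eta) - 1.  Every coagulation lowers the number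
  of clusters by exactly one, so the generator Q of CP(N) acts on V by (Q V)(eta) = minus
  the total jump rate out of eta; for psi = 2ij that rate is at least N * V(eta).  Hence
  Q V <= -N V, and the Lyapunov bound for the semigroup exp(tQ) gives
      E V(eta_t) <= exp(-N t) * V(monomers) <= N exp(-N t).
  Since V >= 1 off the single-cluster state, 1 - p_coag <= N exp(-N t) (Markov inequality).
  All cluster counts n_k with k < N vanish on the single-cluster state and are at most N,
  so their means, second moments and covariances are O(N^2 (1 - p_coag)) = O(N^3 exp(-N t)),
  which tends to 0; and n_N is the indicator of the single-cluster state.
*)

fun matpow :: "'a set \<Rightarrow> ('a \<Rightarrow> 'a \<Rightarrow> real) \<Rightarrow> nat \<Rightarrow> 'a \<Rightarrow> 'a \<Rightarrow> real" where
  "matpow S B 0 x y = (if x = y then 1 else 0)"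
| "matpow S B (Suc m) x y = (\<Sum>e\<in>S. matpow S B m x e * B e y)"

definition matexp :: "'a set \<Rightarrow> ('a \<Rightarrow> 'a \<Rightarrow> real) \<Rightarrow> real \<Rightarrow> 'a \<Rightarrow> 'a \<Rightarrow> real" where
  "matexp S B t x y = (\<Sum>m. t ^ m / fact m * matpow S B m x y)"

lemma matpow_abs_le:
  assumes "\<And>e y. e \<in> S \<Longrightarrow> y \<in> S \<Longrightarrow> \<bar>B e y\<bar> \<le> b" "0 \<le> b" "y \<in> S"
  shows "\<bar>matpow S B m x y\<bar> \<le> (real (card S) * b) ^ m"
  using assms(3)
proof (induction m arbitrary: y)
  case 0 then show ?case by simp
next
  case (Suc m)
  have "\<bar>matpow S B (Suc m) x y\<bar> \<le> (\<Sum>e\<in>S. \<bar>matpow S B m x e\<bar> * \<bar>B e y\<bar>)"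
    by (simp add: abs_mult[symmetric] del: abs_mult)
  also have "\<dots> \<le> (\<Sum>e\<in>S. (real (card S) * b) ^ m * b)"
    by (rule sum_mono) (intro mult_mono, auto intro: Suc assms simp: assms(2))
  also have "\<dots> = (real (card S) * b) ^ Suc m" by simp
  finally show ?case .
qed

lemma summable_matexp_series_abs:
  assumes "finite S" "y \<in> S"
  shows "summable (\<lambda>m. \<bar>t ^ m / fact m * matpow S B m x y\<bar>)"
proof -
  define b where "b = (\<Sum>e\<in>S. \<Sum>y\<in>S. \<bar>B e y\<bar>)"
  have b: "\<bar>B e y\<bar> \<le> b" if "e \<in> S" "y \<in> S" for e y
    using that assms(1) unfolding b_def
    by (intro order_trans[OF member_le_sum[of y S "\<lambda>y. \<bar>B e y\<bar>"]]
          member_le_sum[of e S "\<lambda>e. \<Sum>y\<in>S. \<bar>B e y\<bar>"]) (auto intro: sum_nonneg)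
  have b0: "0 \<le> b" unfolding b_def by (auto intro: sum_nonneg)
  define C where "C = real (card S) * b"
  show ?thesis
  proof (rule summable_comparison_test[where g="\<lambda>m. inverse (fact m) * (\<bar>t\<bar> * C) ^ m"])
    show "summable (\<lambda>m. inverse (fact m) * (\<bar>t\<bar> * C) ^ m)"
      using summable_exp[of "\<bar>t\<bar> * C"] by simp
    show "\<exists>N. \<forall>n\<ge>N. norm \<bar>t ^ n / fact n * matpow S B n x y\<bar> \<le> inverse (fact n) * (\<bar>t\<bar> * C) ^ n"
    proof (intro exI allI impI)
      fix n :: nat
      have "\<bar>t\<bar> ^ n * \<bar>matpow S B n x y\<bar> \<le> \<bar>t\<bar> ^ n * C ^ n"
        using matpow_abs_le[of S B b y n x, OF b b0 assms(2)] by (intro mult_left_mono) (auto simp: C_def)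
      then show "norm \<bar>t ^ n / fact n * matpow S B n x y\<bar> \<le> inverse (fact n) * (\<bar>t\<bar> * C) ^ n"
        by (simp add: abs_mult power_abs divide_inverse power_mult_distrib mult_ac mult_left_mono)
    qed
  qed
qed

lemma summable_matexp_series:
  assumes "finite S" "y \<in> S"
  shows "summable (\<lambda>m. t ^ m / fact m * matpow S B m x y)"
  by (rule summable_rabs_cancel[OF summable_matexp_series_abs[OF assms]])

lemma binomial_pascal_sum:
  fixes f :: "nat \<Rightarrow> real"
  shows "(\<Sum>i\<le>Suc m. real (Suc m choose i) * f i) =
     (\<Sum>i\<le>m. real (m choose i) * f i) + (\<Sum>i\<le>m. real (m choose i) * f (Suc i))"
proof -
  have "(\<Sum>i\<le>Suc m. real (Suc m choose i) * f i) =
      f 0 + (\<Sum>i\<le>m. real (m choose Suc i) * f (Suc i)) + (\<Sum>i\<le>m. real (m choose i) * f (Suc i))"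
    by (subst sum.atMost_Suc_shift) (simp add: sum.distrib algebra_simps)
  also have "f 0 + (\<Sum>i\<le>m. real (m choose Suc i) * f (Suc i)) = (\<Sum>i\<le>Suc m. real (m choose i) * f i)"
    by (subst sum.atMost_Suc_shift) simp
  also have "\<dots> = (\<Sum>i\<le>m. real (m choose i) * f i)" by simp
  finally show ?thesis .
qed

(* Binomial theorem for K + dI, which commutes since dI is central. *)
lemma matpow_add_diagonal:
  assumes "finite S" "y \<in> S"
  shows "matpow S (\<lambda>e y. K e y + d * (if e = y then 1 else 0)) m x y
     = (\<Sum>i\<le>m. real (m choose i) * d ^ i * matpow S K (m - i) x y)"
  using assms(2)
proof (induction m arbitrary: y)
  case 0 then show ?case by simp
next
  case (Suc m)
  let ?K = "\<lambda>e y. K e y + d * (if e = y then 1 else 0)"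
  have "matpow S ?K (Suc m) x y
      = (\<Sum>e\<in>S. matpow S ?K m x e * K e y + (if e = y then d * matpow S ?K m x y else 0))"
    by (auto simp: algebra_simps intro: sum.cong)
  also have "\<dots> = (\<Sum>e\<in>S. matpow S ?K m x e * K e y) + d * matpow S ?K m x y"
    using assms(1) Suc.prems by (simp add: sum.distrib)
  also have "(\<Sum>e\<in>S. matpow S ?K m x e * K e y)
      = (\<Sum>e\<in>S. \<Sum>i\<le>m. real (m choose i) * d ^ i * (matpow S K (m - i) x e * K e y))"
    by (intro sum.cong refl) (simp add: Suc.IH sum_distrib_left sum_distrib_right mult_ac)
  also have "\<dots> = (\<Sum>i\<le>m. real (m choose i) * (d ^ i * matpow S K (Suc m - i) x y))"
    by (subst sum.swap) (auto simp add: sum_distrib_left Suc_diff_le mult_ac intro!: sum.cong)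
  also have "d * matpow S ?K m x y
      = (\<Sum>i\<le>m. real (m choose i) * (d ^ Suc i * matpow S K (Suc m - Suc i) x y))"
    by (simp add: Suc.IH Suc.prems sum_distrib_left mult_ac)
  finally show ?case
    using binomial_pascal_sum[of m "\<lambda>i. d ^ i * matpow S K (Suc m - i) x y"] by (simp add: mult_ac)
qed

lemma exp_series_real: "exp (z::real) = (\<Sum>i. z ^ i / fact i)"
  using sums_unique[OF exp_converges[of z]] by (simp add: divide_inverse mult_ac)

lemma cauchy_product_exp_term:
  fixes c t M :: real
  assumes "i \<le> k"
  shows "(-c*t)^i / fact i * (t^(k-i) / fact (k-i) * M) = t^k / fact k * (real (k choose i) * (-c)^i * M)"
proof -
  have tk: "t^k = t^i * t^(k-i)" using assms by (simp add: power_add[symmetric])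
  have "(fact k :: real) \<noteq> 0" "(fact i :: real) \<noteq> 0" "(fact (k-i) :: real) \<noteq> 0" by auto
  moreover have p: "(-c*t)^i = (-c)^i * t^i" by (rule power_mult_distrib)
  ultimately show ?thesis by (simp add: binomial_fact[OF assms] tk p field_simps)
qed

(* Uniformisation: exp(tB) = exp(-ct) exp(t(B + cI)).  Choosing c large makes
   B + cI entrywise nonnegative, which is how positivity and drift bounds are obtained. *)
lemma matexp_shift_diagonal:
  assumes "finite S" "y \<in> S"
  shows "matexp S B t x y = exp (-c*t) * matexp S (\<lambda>e y. B e y + c * (if e = y then 1 else 0)) t x y"
proof -
  define K where "K = (\<lambda>e y. B e y + c * (if e = y then 1 else 0))"
  have BK: "B = (\<lambda>e y. K e y + (-c) * (if e = y then 1 else 0))"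
    by (auto simp: K_def fun_eq_iff)
  define a where "a = (\<lambda>i. (-c*t)^i / fact i :: real)"
  define b where "b = (\<lambda>n. t^n / fact n * matpow S K n x y)"
  have sa: "summable (\<lambda>k. norm (a k))"
    using summable_norm_exp[of "-c*t"] by (simp add: a_def divide_inverse mult_ac)
  have sb: "summable (\<lambda>k. norm (b k))"
    using summable_matexp_series_abs[OF assms] by (simp add: b_def)
  have "exp (-c*t) * matexp S K t x y = (\<Sum>i. a i) * (\<Sum>m. b m)"
    by (simp add: exp_series_real a_def b_def matexp_def)
  also have "\<dots> = (\<Sum>k. \<Sum>i\<le>k. a i * b (k - i))"
    by (rule Cauchy_product[OF sa sb])
  also have "\<dots> = (\<Sum>k. t^k / fact k * matpow S B k x y)"
  proof (rule suminf_cong)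
    fix k
    have "(\<Sum>i\<le>k. a i * b (k - i))
        = (\<Sum>i\<le>k. t^k / fact k * (real (k choose i) * (-c)^i * matpow S K (k - i) x y))"
      unfolding a_def b_def by (intro sum.cong refl cauchy_product_exp_term) simp
    also have "\<dots> = t^k / fact k * matpow S B k x y"
      by (subst BK, subst matpow_add_diagonal[OF assms]) (simp add: sum_distrib_left)
    finally show "(\<Sum>i\<le>k. a i * b (k - i)) = t^k / fact k * matpow S B k x y" .
  qed
  finally show ?thesis by (simp add: K_def matexp_def)
qed

lemma matpow_nonneg:
  assumes "\<And>e y. e \<in> S \<Longrightarrow> y \<in> S \<Longrightarrow> 0 \<le> K e y" "y \<in> S"
  shows "0 \<le> matpow S K m x y"
  using assms(2) by (induction m arbitrary: y) (auto intro!: sum_nonneg mult_nonneg_nonneg assms(1))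

lemma matpow_drift_bound:
  assumes "finite S" "\<And>e y. e \<in> S \<Longrightarrow> y \<in> S \<Longrightarrow> 0 \<le> K e y"
    and "\<And>e. e \<in> S \<Longrightarrow> (\<Sum>y\<in>S. K e y * V y) \<le> \<rho> * V e"
    and "\<And>e. e \<in> S \<Longrightarrow> 0 \<le> V e" "0 \<le> \<rho>" "x \<in> S"
  shows "(\<Sum>y\<in>S. matpow S K m x y * V y) \<le> \<rho> ^ m * V x"
proof (induction m)
  case 0
  show ?case using assms(1,6) by (simp add: if_distrib[of "\<lambda>a. a * _"] cong: if_cong)
next
  case (Suc m)
  have "(\<Sum>y\<in>S. matpow S K (Suc m) x y * V y) = (\<Sum>e\<in>S. matpow S K m x e * (\<Sum>y\<in>S. K e y * V y))"
    by (simp add: sum_distrib_left sum_distrib_right mult_ac) (rule sum.swap)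
  also have "\<dots> \<le> (\<Sum>e\<in>S. matpow S K m x e * (\<rho> * V e))"
    by (intro sum_mono mult_left_mono assms matpow_nonneg[OF assms(2)]) auto
  also have "\<dots> = \<rho> * (\<Sum>e\<in>S. matpow S K m x e * V e)"
    by (simp add: sum_distrib_left mult_ac)
  also have "\<dots> \<le> \<rho> * (\<rho> ^ m * V x)"
    by (intro mult_left_mono Suc assms)
  finally show ?case by simp
qed

lemma matpow_row_sum:
  assumes "finite S" "\<And>e. e \<in> S \<Longrightarrow> (\<Sum>y\<in>S. B e y) = 0" "x \<in> S"
  shows "(\<Sum>y\<in>S. matpow S B m x y) = (if m = 0 then 1 else 0)"
proof (cases m)
  case 0 then show ?thesis using assms by simp
next
  case (Suc n)
  have "(\<Sum>y\<in>S. matpow S B (Suc n) x y) = (\<Sum>e\<in>S. matpow S B n x e * (\<Sum>y\<in>S. B e y))"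
    by (simp add: sum_distrib_left) (rule sum.swap)
  then show ?thesis using assms Suc by simp
qed

lemma matexp_weighted_sum:
  assumes "finite S"
  shows "(\<Sum>y\<in>S. matexp S B t x y * V y) = (\<Sum>m. t^m / fact m * (\<Sum>y\<in>S. matpow S B m x y * V y))"
proof -
  have "(\<Sum>y\<in>S. matexp S B t x y * V y) = (\<Sum>y\<in>S. \<Sum>m. t^m / fact m * matpow S B m x y * V y)"
    unfolding matexp_def using suminf_mult2[OF summable_matexp_series[OF assms]] by simp
  also have "\<dots> = (\<Sum>m. \<Sum>y\<in>S. t^m / fact m * matpow S B m x y * V y)"
    by (intro suminf_sum[symmetric] summable_mult2 summable_matexp_series[OF assms])
  finally show ?thesis by (simp add: sum_distrib_left mult_ac)
qed

lemma matexp_row_sum: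
  assumes "finite S" "\<And>e. e \<in> S \<Longrightarrow> (\<Sum>y\<in>S. B e y) = 0" "x \<in> S"
  shows "(\<Sum>y\<in>S. matexp S B t x y) = 1"
proof -
  have "(\<Sum>m. t^m / fact m * (if m = 0 then 1 else 0)) = (1::real)"
    using sums_unique[OF sums_single[of 0 "\<lambda>_. 1::real"]] by (simp add: if_distrib cong: if_cong)
  then show ?thesis
    using matexp_weighted_sum[OF assms(1), of B t x "\<lambda>_. 1"] by (simp add: matpow_row_sum[OF assms])
qed

(* Positivity: exp(tB) >= 0 for t >= 0 as soon as the off-diagonal entries of B are
   nonnegative (a consequence of uniformisation). *)
lemma matexp_nonneg:
  assumes "finite S" "y \<in> S" "0 \<le> t"
    and "\<And>e y. e \<in> S \<Longrightarrow> y \<in> S \<Longrightarrow> e \<noteq> y \<Longrightarrow> 0 \<le> B e y"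
  shows "0 \<le> matexp S B t x y"
proof -
  define c where "c = (\<Sum>e\<in>S. \<bar>B e e\<bar>)"
  define K where "K = (\<lambda>e y. B e y + c * (if e = y then 1 else 0))"
  have "0 \<le> K e y" if "e \<in> S" "y \<in> S" for e y
    using assms(4)[OF that] member_le_sum[of e S "\<lambda>e. \<bar>B e e\<bar>"] assms(1) that
    by (cases "e = y") (auto simp: K_def c_def)
  then have "0 \<le> matexp S K t x y"
    unfolding matexp_def
    by (intro suminf_nonneg summable_matexp_series assms mult_nonneg_nonneg matpow_nonneg)
      (auto simp: assms(3))
  then show ?thesis
    unfolding matexp_shift_diagonal[OF assms(1,2), of B t x c] K_def by simp
qed

lemma matexp_drift_bound:
  assumes S: "finite S" and x: "x \<in> S" and t: "0 \<le> t"
    and off: "\<And>e y. e \<in> S \<Longrightarrow> y \<in> S \<Longrightarrow> e \<noteq> y \<Longrightarrow> 0 \<le> B e y"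
    and V0: "\<And>e. e \<in> S \<Longrightarrow> 0 \<le> V e"
    and drift: "\<And>e. e \<in> S \<Longrightarrow> (\<Sum>y\<in>S. B e y * V y) \<le> - r * V e"
  shows "(\<Sum>y\<in>S. matexp S B t x y * V y) \<le> exp (- r * t) * V x"
proof -
  define c where "c = \<bar>r\<bar> + (\<Sum>e\<in>S. \<bar>B e e\<bar>)"
  define K where "K = (\<lambda>e y. B e y + c * (if e = y then 1 else 0))"
  have sum0: "0 \<le> (\<Sum>e\<in>S. \<bar>B e e\<bar>)" by (simp add: sum_nonneg)
  have c: "r \<le> c" "\<And>e. e \<in> S \<Longrightarrow> \<bar>B e e\<bar> \<le> c"
  proof -
    show "r \<le> c" using sum0 abs_ge_self[of r] unfolding c_def by linarith
    fix e assume "e \<in> S"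
    then have "\<bar>B e e\<bar> \<le> (\<Sum>e\<in>S. \<bar>B e e\<bar>)" using S by (intro member_le_sum) auto
    then show "\<bar>B e e\<bar> \<le> c" unfolding c_def by simp
  qed
  have K0: "0 \<le> K e y" if "e \<in> S" "y \<in> S" for e y
    using off[OF that] c(2)[OF that(1)] by (cases "e = y") (auto simp: K_def)
  have KV: "(\<Sum>y\<in>S. K e y * V y) \<le> (c - r) * V e" if e: "e \<in> S" for e
  proof -
    have "(\<Sum>y\<in>S. K e y * V y) = (\<Sum>y\<in>S. B e y * V y + (if e = y then c * V y else 0))"
      by (rule sum.cong) (auto simp: K_def algebra_simps)
    also have "\<dots> = (\<Sum>y\<in>S. B e y * V y) + c * V e"
      using e S by (simp add: sum.distrib)
    finally show ?thesis using drift[OF e] by (simp add: algebra_simps)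
  qed
  have "(\<Sum>y\<in>S. matexp S B t x y * V y) = exp (-c*t) * (\<Sum>y\<in>S. matexp S K t x y * V y)"
    by (simp add: matexp_shift_diagonal[OF S, of _ B t x c] K_def sum_distrib_left mult_ac)
  also have "(\<Sum>y\<in>S. matexp S K t x y * V y) \<le> (\<Sum>m. t^m / fact m * ((c - r) ^ m * V x))"
    unfolding matexp_weighted_sum[OF S]
  proof (rule suminf_le)
    show "t^m / fact m * (\<Sum>y\<in>S. matpow S K m x y * V y) \<le> t^m / fact m * ((c - r) ^ m * V x)" for m
      by (intro mult_left_mono matpow_drift_bound[OF S K0 KV V0]) (auto simp: c x t)
    show "summable (\<lambda>m. t^m / fact m * (\<Sum>y\<in>S. matpow S K m x y * V y))"
      using summable_sum[of S "\<lambda>y m. t^m / fact m * matpow S K m x y * V y"]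
        summable_mult2[OF summable_matexp_series[OF S]]
      by (simp add: sum_distrib_left mult_ac)
    show "summable (\<lambda>m. t^m / fact m * ((c - r) ^ m * V x))"
      using summable_mult2[OF summable_exp[of "t * (c - r)"], of "V x"]
      by (simp add: power_mult_distrib divide_inverse mult_ac)
  qed
  also have "(\<Sum>m. t^m / fact m * ((c - r) ^ m * V x)) = exp (t * (c - r)) * V x"
    using suminf_mult2[OF summable_exp_generic[of "t * (c - r)"], of "V x"]
    by (simp add: exp_def power_mult_distrib divide_inverse mult_ac)
  finally have "(\<Sum>y\<in>S. matexp S B t x y * V y) \<le> exp (-c*t) * (exp (t * (c - r)) * V x)"
    by (simp add: mult_left_mono)
  also have "\<dots> = exp (- r * t) * V x"
    by (simp add: mult.assoc[symmetric] exp_add[symmetric] algebra_simps)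
  finally show ?thesis .
qed

definition num_clusters :: "nat \<Rightarrow> (nat \<Rightarrow> nat) \<Rightarrow> nat" where
  "num_clusters N eta = (\<Sum>k=1..N. eta k)"

lemma parts_zero: "eta \<in> parts N \<Longrightarrow> k \<notin> {1..N} \<Longrightarrow> eta k = 0"
  by (auto simp: parts_def)

lemma parts_mass: "eta \<in> parts N \<Longrightarrow> (\<Sum>k=1..N. k * eta k) = N"
  by (auto simp: parts_def)

lemma parts_mass_real: "eta \<in> parts N \<Longrightarrow> (\<Sum>k=1..N. real k * real (eta k)) = real N"
  using arg_cong[OF parts_mass, of eta N real] by simp

lemma parts_count_le:
  assumes "eta \<in> parts N"
  shows "eta k \<le> N"
proof (cases "k \<in> {1..N}")
  case True
  have "eta k \<le> k * eta k" using True by simp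
  also have "\<dots> \<le> (\<Sum>k=1..N. k * eta k)" by (rule member_le_sum) (use True in auto)
  finally show ?thesis using parts_mass[OF assms] by simp
next
  case False then show ?thesis using parts_zero[OF assms] by simp
qed

lemma finite_parts: "finite (parts N)"
proof (rule finite_subset)
  show "parts N \<subseteq> {f. \<forall>x. (x \<in> {1..N} \<longrightarrow> f x \<in> {0..N}) \<and> (x \<notin> {1..N} \<longrightarrow> f x = 0)}"
    using parts_count_le parts_zero by auto
  show "finite {f. \<forall>x. (x \<in> {1..N} \<longrightarrow> f x \<in> {0..N}) \<and> (x \<notin> {1..N} \<longrightarrow> f x = (0::nat))}"
    by (rule finite_set_of_finite_funs) auto
qed

lemma single_cluster_in_parts: "1 \<le> N \<Longrightarrow> single_cluster N \<in> parts N"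
  by (auto simp: parts_def single_cluster_def if_distrib cong: if_cong)

lemma monomers_in_parts: "1 \<le> N \<Longrightarrow> monomers N \<in> parts N"
  by (auto simp: parts_def monomers_def if_distrib cong: if_cong)

lemma num_clusters_monomers: "1 \<le> N \<Longrightarrow> num_clusters N (monomers N) = N"
  by (auto simp: num_clusters_def monomers_def cong: if_cong)

lemma eq_single_cluster_if_full:
  assumes e: "eta \<in> parts N" and N: "1 \<le> N" and full: "1 \<le> eta N"
  shows "eta = single_cluster N"
proof -
  have "N * eta N + (\<Sum>k\<in>{1..N}-{N}. k * eta k) = N"
    using parts_mass[OF e] sum.remove[of "{1..N}" N "\<lambda>k. k * eta k"] N by simp
  moreover have "N * 1 \<le> N * eta N" using full by (rule mult_le_mono2)
  ultimately have "N * eta N = N" and rest: "(\<Sum>k\<in>{1..N}-{N}. k * eta k) = 0"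
    by linarith+
  then have "eta N = 1" using N by simp
  moreover have "eta k = 0" if "k \<in> {1..N}-{N}" for k
    using rest that by auto
  ultimately show ?thesis
    using parts_zero[OF e] by (auto simp: single_cluster_def fun_eq_iff)
qed

lemma count_top_size:
  assumes "eta \<in> parts N" "1 \<le> N"
  shows "eta N = (if eta = single_cluster N then 1 else 0)"
  using eq_single_cluster_if_full[OF assms] by (cases "eta N") (auto simp: single_cluster_def)

(* Every state other than the single cluster has at least two clusters: without a
   cluster of size N all sizes are at most N - 1. *)
lemma num_clusters_ge_2:
  assumes e: "eta \<in> parts N" and N: "1 \<le> N" and ns: "eta \<noteq> single_cluster N"
  shows "2 \<le> num_clusters N eta"
proof (rule ccontr)
  assume "\<not> 2 \<le> num_clusters N eta"
  then have few: "num_clusters N eta \<le> 1" by simp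
  have "eta N = 0" using count_top_size[OF e N] ns by simp
  then have "k * eta k \<le> (N - 1) * eta k" if "k \<in> {1..N}" for k
    using that by (cases "k = N") auto
  then have "(\<Sum>k=1..N. k * eta k) \<le> (\<Sum>k=1..N. (N - 1) * eta k)"
    by (rule sum_mono)
  then have "N \<le> (\<Sum>k=1..N. (N - 1) * eta k)"
    using parts_mass[OF e] by simp
  then have "N \<le> (N - 1) * num_clusters N eta"
    by (simp add: num_clusters_def sum_distrib_left)
  also have "\<dots> \<le> N - 1" using few by (metis mult.right_neutral mult_le_mono2)
  finally show False using N by linarith
qed

lemma num_clusters_pos: "eta \<in> parts N \<Longrightarrow> 1 \<le> N \<Longrightarrow> 1 \<le> num_clusters N eta"
  using num_clusters_ge_2[of eta N]
  by (cases "eta = single_cluster N") (auto simp: num_clusters_def single_cluster_def)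

lemma pair_rate_nonneg: "0 \<le> pair_rate psi_mult eta i j"
proof -
  have "0 \<le> real (eta i) * (real (eta i) - 1) / 2 * (2 * real i * real i)"
    by (cases "eta i") auto
  then show ?thesis by (auto simp: pair_rate_def psi_mult_def)
qed

lemma pair_rate_pos_counts:
  assumes "pair_rate psi_mult eta i j \<noteq> 0"
  shows "1 \<le> eta i" "1 \<le> eta j" "i = j \<Longrightarrow> 2 \<le> eta i"
  using assms by (auto simp: pair_rate_def psi_mult_def split: if_splits)

lemma merge_count:
  assumes "pair_rate psi_mult eta i j \<noteq> 0" "1 \<le> i" "i \<le> j"
  shows "real (merge eta i j k) = real (eta k) - (if k = i then 1 else 0) - (if k = j then 1 else 0)
      + (if k = i + j then 1 else 0)"
  using pair_rate_pos_counts[OF assms(1)] assms(2,3)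
  by (cases "i = j") (auto simp: merge_def Let_def)

lemma merge_size_le:
  assumes e: "eta \<in> parts N" and r: "pair_rate psi_mult eta i j \<noteq> 0"
    and ij: "1 \<le> i" "i \<le> j" "j \<le> N"
  shows "i + j \<le> N"
proof (cases "i = j")
  case True
  have "i * 2 \<le> i * eta i" using pair_rate_pos_counts(3)[OF r True] by (rule mult_le_mono2)
  also have "\<dots> \<le> (\<Sum>k=1..N. k * eta k)"
    by (rule member_le_sum) (use ij in auto)
  finally show ?thesis using True parts_mass[OF e] by simp
next
  case False
  have "i * 1 + j * 1 \<le> i * eta i + j * eta j"
    using pair_rate_pos_counts(1,2)[OF r] by (intro add_mono mult_le_mono2)
  also have "\<dots> = (\<Sum>k\<in>{i,j}. k * eta k)" using False by simp
  also have "\<dots> \<le> (\<Sum>k=1..N. k * eta k)"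
    by (rule sum_mono2) (use ij in auto)
  finally show ?thesis using parts_mass[OF e] by simp
qed

lemma merge_transition:
  assumes e: "eta \<in> parts N" and r: "pair_rate psi_mult eta i j \<noteq> 0"
    and ij: "1 \<le> i" "i \<le> j" "j \<le> N"
  shows "merge eta i j \<in> parts N - {eta}"
    and "real (num_clusters N (merge eta i j)) = real (num_clusters N eta) - 1"
proof -
  note mc = merge_count[OF r ij(1,2)]
  have inI: "i \<in> {1..N}" "j \<in> {1..N}" "i + j \<in> {1..N}"
    using ij merge_size_le[OF e r ij] by auto
  have "(\<Sum>k=1..N. real k * real (merge eta i j k)) = (\<Sum>k=1..N. real k * real (eta k))
      - (\<Sum>k=1..N. if k = i then real k else 0) - (\<Sum>k=1..N. if k = j then real k else 0)
      + (\<Sum>k=1..N. if k = i + j then real k else 0)"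
    by (simp add: mc algebra_simps sum.distrib sum_subtractf if_distrib[of "(*) _"] cong: if_cong)
  also have "\<dots> = real N" using inI parts_mass_real[OF e] by simp
  finally have "real (\<Sum>k=1..N. k * merge eta i j k) = real N" by simp
  then have mass: "(\<Sum>k=1..N. k * merge eta i j k) = N" by (simp only: of_nat_eq_iff)
  have supp: "1 \<le> k \<and> k \<le> N" if "merge eta i j k \<noteq> 0" for k
  proof (rule ccontr)
    assume "\<not> (1 \<le> k \<and> k \<le> N)"
    then have "k \<noteq> i" "k \<noteq> j" "k \<noteq> i + j" "eta k = 0" using inI parts_zero[OF e] by auto
    then show False using that mc[of k] by simp
  qed
  have "real (merge eta i j (i + j)) = real (eta (i + j)) + 1" using ij by (simp add: mc)
  then show "merge eta i j \<in> parts N - {eta}" using mass supp by (auto simp: parts_def)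
  have "real (num_clusters N (merge eta i j)) = (\<Sum>k=1..N. real (eta k))
      - (\<Sum>k=1..N. if k = i then 1 else 0) - (\<Sum>k=1..N. if k = j then 1 else 0)
      + (\<Sum>k=1..N. if k = i + j then 1 else 0)"
    by (simp only: num_clusters_def of_nat_sum mc sum.distrib sum_subtractf)
  also have "\<dots> = real (num_clusters N eta) - 1" using inI by (simp add: num_clusters_def)
  finally show "real (num_clusters N (merge eta i j)) = real (num_clusters N eta) - 1" .
qed

lemma upper_triangle_sum:
  fixes g :: "nat \<Rightarrow> nat \<Rightarrow> real" and d :: "nat \<Rightarrow> real"
  assumes sym: "\<And>i j. g i j = g j i"
  shows "2 * (\<Sum>i=1..n. \<Sum>j=i..n. (if i = j then d i else g i j)) =
    (\<Sum>i=1..n. \<Sum>j=1..n. g i j) - (\<Sum>i=1..n. g i i) + 2 * (\<Sum>i=1..n. d i)"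
proof (induction n)
  case 0 then show ?case by simp
next
  case (Suc n)
  let ?h = "\<lambda>i j. if i = j then d i else g i j"
  have L: "(\<Sum>i=1..Suc n. \<Sum>j=i..Suc n. ?h i j)
      = (\<Sum>i=1..n. \<Sum>j=i..n. ?h i j) + (\<Sum>i=1..n. g i (Suc n)) + d (Suc n)"
  proof -
    have "(\<Sum>i=1..Suc n. \<Sum>j=i..Suc n. ?h i j) = (\<Sum>i=1..n. \<Sum>j=i..Suc n. ?h i j) + d (Suc n)"
      by simp
    also have "(\<Sum>i=1..n. \<Sum>j=i..Suc n. ?h i j) = (\<Sum>i=1..n. (\<Sum>j=i..n. ?h i j) + g i (Suc n))"
      by (rule sum.cong) (auto)
    finally show ?thesis by (simp add: sum.distrib)
  qed
  have R: "(\<Sum>i=1..Suc n. \<Sum>j=1..Suc n. g i j)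
      = (\<Sum>i=1..n. \<Sum>j=1..n. g i j) + 2 * (\<Sum>i=1..n. g i (Suc n)) + g (Suc n) (Suc n)"
  proof -
    have "(\<Sum>i=1..Suc n. \<Sum>j=1..Suc n. g i j) = (\<Sum>i=1..Suc n. (\<Sum>j=1..n. g i j) + g i (Suc n))"
      by simp
    also have "\<dots> = (\<Sum>i=1..n. \<Sum>j=1..n. g i j) + (\<Sum>j=1..n. g (Suc n) j)
        + (\<Sum>i=1..n. g i (Suc n)) + g (Suc n) (Suc n)"
      by (simp add: sum.distrib)
    also have "(\<Sum>j=1..n. g (Suc n) j) = (\<Sum>i=1..n. g i (Suc n))" by (simp add: sym)
    finally show ?thesis by simp
  qed
  have e1: "(\<Sum>i=1..Suc n. g i i) = (\<Sum>i=1..n. g i i) + g (Suc n) (Suc n)" by simp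
  have e2: "(\<Sum>i=1..Suc n. d i) = (\<Sum>i=1..n. d i) + d (Suc n)" by simp
  show ?case unfolding L R e1 e2 using Suc.IH by (simp add: algebra_simps)
qed

lemma pair_rate_lower:
  assumes i: "1 \<le> i" and j: "1 \<le> j"
  shows "(if i = j then real i * real (eta i) * (real (eta i) - 1)
          else (real i + real j) * real (eta i) * real (eta j)) \<le> pair_rate psi_mult eta i j"
proof (cases "i = j")
  case True
  have "0 \<le> real (eta i) * (real (eta i) - 1)" by (cases "eta i") auto
  moreover have "real i \<le> real i * real i" using i by (simp add: mult_le_cancel_left1)
  ultimately have "real i * (real (eta i) * (real (eta i) - 1))
      \<le> real i * real i * (real (eta i) * (real (eta i) - 1))"
    by (rule mult_right_mono[rotated])
  moreover have "pair_rate psi_mult eta i j = real i * real i * (real (eta i) * (real (eta i) - 1))"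
    using True by (simp add: pair_rate_def psi_mult_def)
  ultimately show ?thesis using True by (simp add: mult_ac)
next
  case False
  have "0 \<le> (real i - 1) * (real j - 1)" using i j by simp
  then have "real i + real j \<le> 2 * real i * real j"
    using mult_mono[of 1 "real i" 1 "real j"] i j by (simp add: algebra_simps)
  then have "(real i + real j) * (real (eta i) * real (eta j))
      \<le> 2 * real i * real j * (real (eta i) * real (eta j))"
    by (rule mult_right_mono) simp
  then show ?thesis using False by (simp add: pair_rate_def psi_mult_def mult_ac)
qed

definition total_rate :: "nat \<Rightarrow> (nat \<Rightarrow> nat) \<Rightarrow> real" where
  "total_rate N eta = (\<Sum>(i, j) \<in> (SIGMA i:{1..N}. {i..N}). pair_rate psi_mult eta i j)"

(* Key estimate: the total rate is at least N times (number of clusters - 1).  Summing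
   the lower bounds of pair_rate_lower over the upper triangle gives exactly N (n - 1). *)
lemma total_rate_lower:
  assumes e: "eta \<in> parts N"
  shows "real N * (real (num_clusters N eta) - 1) \<le> total_rate N eta"
proof -
  define er where "er = (\<lambda>k. real (eta k))"
  define g where "g = (\<lambda>i j. (real i + real j) * er i * er j)"
  define d where "d = (\<lambda>i. real i * er i * (er i - 1))"
  have m: "(\<Sum>k=1..N. er k) = real (num_clusters N eta)" by (simp add: er_def num_clusters_def)
  have Nr: "(\<Sum>k=1..N. real k * er k) = real N" using parts_mass_real[OF e] by (simp add: er_def)
  have "(\<Sum>i=1..N. \<Sum>j=i..N. if i = j then d i else g i j)
      \<le> (\<Sum>i=1..N. \<Sum>j=i..N. pair_rate psi_mult eta i j)"
  proof (intro sum_mono)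
    fix i j assume "i \<in> {1..N}" "j \<in> {i..N}"
    then show "(if i = j then d i else g i j) \<le> pair_rate psi_mult eta i j"
      using pair_rate_lower[of i j eta] by (auto simp: d_def g_def er_def)
  qed
  also have "\<dots> = total_rate N eta"
    unfolding total_rate_def by (subst sum.Sigma) auto
  finally have "(\<Sum>i=1..N. \<Sum>j=i..N. if i = j then d i else g i j) \<le> total_rate N eta" .
  moreover have "2 * (\<Sum>i=1..N. \<Sum>j=i..N. if i = j then d i else g i j)
      = (\<Sum>i=1..N. \<Sum>j=1..N. g i j) - (\<Sum>i=1..N. g i i) + 2 * (\<Sum>i=1..N. d i)"
    by (rule upper_triangle_sum) (simp add: g_def algebra_simps)
  moreover have "(\<Sum>i=1..N. \<Sum>j=1..N. g i j) = 2 * (real N * real (num_clusters N eta))"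
  proof -
    have "(\<Sum>i=1..N. \<Sum>j=1..N. g i j)
        = (\<Sum>i=1..N. real i * er i * (\<Sum>j=1..N. er j) + er i * (\<Sum>j=1..N. real j * er j))"
      by (simp add: g_def sum_distrib_left sum.distrib algebra_simps)
    also have "\<dots> = (\<Sum>i=1..N. real i * er i) * (\<Sum>j=1..N. er j)
        + (\<Sum>i=1..N. er i) * (\<Sum>j=1..N. real j * er j)"
      by (simp add: sum.distrib sum_distrib_right)
    finally show ?thesis unfolding m Nr by simp
  qed
  moreover have "- (\<Sum>i=1..N. g i i) + 2 * (\<Sum>i=1..N. d i) = - 2 * real N"
  proof -
    have "- (\<Sum>i=1..N. g i i) + 2 * (\<Sum>i=1..N. d i) = (\<Sum>i=1..N. - 2 * (real i * er i))"
      by (simp add: g_def d_def sum_distrib_left sum_negf[symmetric] sum.distrib[symmetric] algebra_simps)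
    then show ?thesis unfolding sum_distrib_left[symmetric] Nr .
  qed
  moreover have "real N * (real (num_clusters N eta) - 1) = real N * real (num_clusters N eta) - real N"
    by (simp add: algebra_simps)
  ultimately show ?thesis by linarith
qed

lemma Qgen_apply:
  assumes e: "eta \<in> parts N"
  shows "(\<Sum>y\<in>parts N. Qgen psi N eta y * V y) =
    (\<Sum>(i, j) \<in> (SIGMA i:{1..N}. {i..N}).
       if merge eta i j \<in> parts N - {eta} then pair_rate psi eta i j * (V (merge eta i j) - V eta) else 0)"
proof -
  let ?S = "parts N - {eta}" and ?P = "SIGMA i:{1..N}. {i..N}"
  have fS: "finite (parts N)" by (rule finite_parts)
  have "(\<Sum>y\<in>parts N. Qgen psi N eta y * V y)
      = Qgen psi N eta eta * V eta + (\<Sum>y\<in>?S. Qgen psi N eta y * V y)"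
    by (rule sum.remove[OF fS e])
  also have "(\<Sum>y\<in>?S. Qgen psi N eta y * V y) = (\<Sum>y\<in>?S. Qoff psi N eta y * V y)"
    by (rule sum.cong) (auto simp: Qgen_def)
  also have "Qgen psi N eta eta * V eta + (\<Sum>y\<in>?S. Qoff psi N eta y * V y)
      = (\<Sum>y\<in>?S. Qoff psi N eta y * (V y - V eta))"
    by (simp add: Qgen_def right_diff_distrib sum_subtractf sum_distrib_right)
  also have "\<dots> = (\<Sum>y\<in>?S. \<Sum>(i, j)\<in>?P.
      if merge eta i j = y then pair_rate psi eta i j * (V y - V eta) else 0)"
    unfolding Qoff_def sum_distrib_right by (intro sum.cong refl) (auto simp: split_def)
  also have "\<dots> = (\<Sum>(i, j)\<in>?P. \<Sum>y\<in>?S.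
      if merge eta i j = y then pair_rate psi eta i j * (V y - V eta) else 0)"
    unfolding split_def by (rule sum.swap)
  also have "\<dots> = (\<Sum>(i, j)\<in>?P.
      if merge eta i j \<in> ?S then pair_rate psi eta i j * (V (merge eta i j) - V eta) else 0)"
    using fS by (simp add: split_def)
  finally show ?thesis .
qed

lemma Qgen_row_sum: "eta \<in> parts N \<Longrightarrow> (\<Sum>y\<in>parts N. Qgen psi N eta y) = 0"
  using Qgen_apply[of eta N psi "\<lambda>_. 1"] by (simp cong: if_cong)

lemma Qgen_offdiag_nonneg: "eta \<noteq> y \<Longrightarrow> 0 \<le> Qgen psi_mult N eta y"
  by (simp add: Qgen_def Qoff_def pair_rate_nonneg sum_nonneg split_def)

(* Drift of the cluster count: Q V = - total rate <= - N V for V = clusters - 1. *)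
lemma Qgen_drift_num_clusters:
  assumes e: "eta \<in> parts N"
  shows "(\<Sum>y\<in>parts N. Qgen psi_mult N eta y * (real (num_clusters N y) - 1))
    \<le> - real N * (real (num_clusters N eta) - 1)"
proof -
  have "(\<Sum>y\<in>parts N. Qgen psi_mult N eta y * (real (num_clusters N y) - 1))
      = (\<Sum>(i, j) \<in> (SIGMA i:{1..N}. {i..N}). - pair_rate psi_mult eta i j)"
    unfolding Qgen_apply[OF e]
  proof (intro sum.cong refl, clarify)
    fix i j assume ij: "i \<in> {1..N}" "j \<in> {i..N}"
    show "(if merge eta i j \<in> parts N - {eta}
          then pair_rate psi_mult eta i j * ((real (num_clusters N (merge eta i j)) - 1)
            - (real (num_clusters N eta) - 1)) else 0) = - pair_rate psi_mult eta i j"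
      using merge_transition[OF e _, of i j] ij by (cases "pair_rate psi_mult eta i j = 0") auto
  qed
  also have "\<dots> = - total_rate N eta" by (simp add: total_rate_def sum_negf split_def)
  finally show ?thesis using total_rate_lower[OF e] by simp
qed

lemma Qpow_eq_matpow: "Qpow psi N m x y = matpow (parts N) (Qgen psi N) m x y"
  by (induction m arbitrary: y) auto

lemma distCP_eq_matexp: "distCP psi N t y = matexp (parts N) (Qgen psi N) t (monomers N) y"
  by (simp add: distCP_def Ptrans_def matexp_def Qpow_eq_matpow)

lemma distCP_nonneg: "y \<in> parts N \<Longrightarrow> 0 \<le> t \<Longrightarrow> 0 \<le> distCP psi_mult N t y"
  unfolding distCP_eq_matexp by (intro matexp_nonneg finite_parts Qgen_offdiag_nonneg)

lemma distCP_total: "1 \<le> N \<Longrightarrow> (\<Sum>y\<in>parts N. distCP psi N t y) = 1"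
  unfolding distCP_eq_matexp by (intro matexp_row_sum finite_parts Qgen_row_sum monomers_in_parts)

lemma distCP_excess_clusters:
  assumes N: "1 \<le> N" and t: "0 \<le> t"
  shows "(\<Sum>y\<in>parts N. distCP psi_mult N t y * (real (num_clusters N y) - 1))
    \<le> exp (- real N * t) * (real N - 1)"
proof -
  have "(\<Sum>y\<in>parts N. matexp (parts N) (Qgen psi_mult N) t (monomers N) y * (real (num_clusters N y) - 1))
      \<le> exp (- real N * t) * (real (num_clusters N (monomers N)) - 1)"
    using num_clusters_pos[OF _ N] Qgen_drift_num_clusters
    by (intro matexp_drift_bound finite_parts monomers_in_parts N t Qgen_offdiag_nonneg) auto
  then show ?thesis by (simp add: distCP_eq_matexp num_clusters_monomers[OF N])
qed

lemma coag_defect_eq: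
  assumes "1 \<le> N"
  shows "1 - p_coag psi N t = (\<Sum>y\<in>parts N - {single_cluster N}. distCP psi N t y)"
  using distCP_total[OF assms, of psi t]
    sum.remove[OF finite_parts single_cluster_in_parts[OF assms], of "distCP psi N t"]
  unfolding p_coag_def by linarith

(* Markov inequality: since V >= 1 off the single cluster, 1 - p_coag <= N exp(-N t). *)
lemma coag_defect_bound:
  assumes N: "1 \<le> N" and t: "0 \<le> t"
  shows "0 \<le> 1 - p_coag psi_mult N t" "1 - p_coag psi_mult N t \<le> real N * exp (- real N * t)"
proof -
  let ?P = "distCP psi_mult N t" and ?V = "\<lambda>y. real (num_clusters N y) - 1"
  let ?S = "parts N - {single_cluster N}"
  show "0 \<le> 1 - p_coag psi_mult N t"
    unfolding coag_defect_eq[OF N] by (intro sum_nonneg distCP_nonneg t) auto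
  have "(\<Sum>y\<in>?S. ?P y) \<le> (\<Sum>y\<in>?S. ?P y * ?V y)"
  proof (rule sum_mono)
    fix y assume y: "y \<in> ?S"
    then have "1 \<le> ?V y" using num_clusters_ge_2[of y N] N by simp
    then show "?P y \<le> ?P y * ?V y"
      using distCP_nonneg[of y N t] y t by (simp add: mult_le_cancel_left1)
  qed
  also have "\<dots> \<le> (\<Sum>y\<in>parts N. ?P y * ?V y)"
    using num_clusters_pos[OF _ N] distCP_nonneg[OF _ t]
    by (intro sum_mono2 finite_parts) auto
  also have "\<dots> \<le> exp (- real N * t) * (real N - 1)"
    by (rule distCP_excess_clusters[OF N t])
  also have "\<dots> \<le> real N * exp (- real N * t)" by simp
  finally show "1 - p_coag psi_mult N t \<le> real N * exp (- real N * t)"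
    unfolding coag_defect_eq[OF N] .
qed

lemma expectation_off_single_cluster:
  assumes N: "1 \<le> N" and t: "0 \<le> t" and f_single: "f (single_cluster N) = 0"
    and f_bounds: "\<And>y. y \<in> parts N \<Longrightarrow> 0 \<le> f y \<and> f y \<le> b"
  shows "0 \<le> (\<Sum>y\<in>parts N. distCP psi_mult N t y * f y)"
    "(\<Sum>y\<in>parts N. distCP psi_mult N t y * f y) \<le> b * (1 - p_coag psi_mult N t)"
proof -
  let ?P = "distCP psi_mult N t" and ?S = "parts N - {single_cluster N}"
  show "0 \<le> (\<Sum>y\<in>parts N. ?P y * f y)"
    using f_bounds distCP_nonneg[OF _ t] by (intro sum_nonneg mult_nonneg_nonneg) auto
  have "(\<Sum>y\<in>parts N. ?P y * f y) = (\<Sum>y\<in>?S. ?P y * f y)"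
    using sum.remove[OF finite_parts single_cluster_in_parts[OF N], of "\<lambda>y. ?P y * f y"] f_single
    by simp
  also have "\<dots> \<le> (\<Sum>y\<in>?S. ?P y * b)"
    using f_bounds distCP_nonneg[OF _ t] by (intro sum_mono mult_left_mono) auto
  also have "\<dots> = b * (1 - p_coag psi_mult N t)"
    by (simp add: coag_defect_eq[OF N] sum_distrib_left mult.commute)
  finally show "(\<Sum>y\<in>parts N. ?P y * f y) \<le> b * (1 - p_coag psi_mult N t)" .
qed

(* E n_N = p_coag, because n_N is the indicator of the single-cluster state. *)
lemma mean_top_size:
  assumes N: "1 \<le> N"
  shows "mean_n psi N t N = p_coag psi N t"
proof -
  have "mean_n psi N t N = (\<Sum>y\<in>parts N. if y = single_cluster N then distCP psi N t y else 0)"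
    unfolding mean_n_def by (intro sum.cong refl) (simp add: count_top_size[OF _ N])
  then show ?thesis
    by (simp add: p_coag_def finite_parts single_cluster_in_parts[OF N])
qed

lemma covariance_from_moment_bounds:
  fixes s a b x d :: real
  assumes "0 \<le> s" "s \<le> x * x * d" "0 \<le> a" "a \<le> x * d" "0 \<le> b" "b \<le> x * d"
    and "0 \<le> d" "d \<le> 1"
  shows "\<bar>s - a * b\<bar> \<le> x * x * d"
proof -
  have "a * b \<le> (x * d) * (x * d)" using assms by (intro mult_mono) auto
  also have "\<dots> = x * x * d * d" by (simp add: mult_ac)
  also have "\<dots> \<le> x * x * d" using assms by (intro mult_left_le) auto
  finally have "a * b \<le> x * x * d" .
  moreover have "0 \<le> a * b" using assms by simp
  ultimately show ?thesis using assms(1,2) unfolding abs_le_iff by linarith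
qed

lemma cluster_statistics_bound:
  assumes N: "1 \<le> N" and kl: "k \<noteq> N" "l \<noteq> N" and t: "0 \<le> t"
  defines "g \<equiv> real N ^ 3 * exp (- real N * t)"
  shows "\<bar>mean_n psi_mult N t k\<bar> \<le> g" "\<bar>cov_n psi_mult N t k l\<bar> \<le> g"
    "\<bar>p_coag psi_mult N t - 1\<bar> \<le> g"
proof -
  define \<delta> where "\<delta> = 1 - p_coag psi_mult N t"
  have \<delta>: "0 \<le> \<delta>" "\<delta> \<le> real N * exp (- real N * t)" "\<delta> \<le> 1"
    using coag_defect_bound[OF N t] distCP_nonneg[OF single_cluster_in_parts[OF N] t]
    by (auto simp: \<delta>_def p_coag_def)
  have count: "0 \<le> real (y k) \<and> real (y k) \<le> real N" "0 \<le> real (y l) \<and> real (y l) \<le> real N"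
    if "y \<in> parts N" for y
    using parts_count_le[OF that] by auto
  have single: "single_cluster N k = 0" "single_cluster N l = 0"
    using kl by (auto simp: single_cluster_def)
  note mean_k = expectation_off_single_cluster[OF N t, of "\<lambda>y. real (y k)" "real N"]
  note mean_l = expectation_off_single_cluster[OF N t, of "\<lambda>y. real (y l)" "real N"]
  have product: "0 \<le> real (y k) * real (y l) \<and> real (y k) * real (y l) \<le> real N * real N"
    if "y \<in> parts N" for y
    using count[OF that] by (auto intro: mult_mono)
  note moment = expectation_off_single_cluster[OF N t, of "\<lambda>y. real (y k) * real (y l)" "real N * real N",
      OF _ product]
  have mean_bound: "0 \<le> mean_n psi_mult N t k" "mean_n psi_mult N t k \<le> real N * \<delta>"
    using mean_k single count by (auto simp: mean_n_def \<delta>_def)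
  have Ng: "real N * \<delta> \<le> g" "real N * real N * \<delta> \<le> g" "\<delta> \<le> g"
  proof -
    have "real N * real N * \<delta> \<le> real N * real N * (real N * exp (- real N * t))"
      using \<delta> by (intro mult_left_mono) auto
    then show "real N * real N * \<delta> \<le> g" by (simp add: g_def power3_eq_cube mult_ac)
    moreover have "\<delta> \<le> real N * \<delta>" "real N * \<delta> \<le> real N * real N * \<delta>"
      using N \<delta>(1) by (simp_all add: mult_le_cancel_right1 mult_right_mono)
    ultimately show "real N * \<delta> \<le> g" "\<delta> \<le> g" by linarith+
  qed
  show "\<bar>mean_n psi_mult N t k\<bar> \<le> g" using mean_bound Ng by simp
  show "\<bar>p_coag psi_mult N t - 1\<bar> \<le> g" using \<delta>(1) Ng by (simp add: \<delta>_def)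
  have "\<bar>cov_n psi_mult N t k l\<bar> \<le> real N * real N * \<delta>"
    unfolding cov_n_def
  proof (rule covariance_from_moment_bounds)
    show "0 \<le> mean_n psi_mult N t l" "mean_n psi_mult N t l \<le> real N * \<delta>"
      using mean_l single count by (auto simp: mean_n_def \<delta>_def)
    show "0 \<le> (\<Sum>y\<in>parts N. distCP psi_mult N t y * real (y k) * real (y l))"
      "(\<Sum>y\<in>parts N. distCP psi_mult N t y * real (y k) * real (y l)) \<le> real N * real N * \<delta>"
      using moment single by (simp_all add: \<delta>_def mult.assoc)
  qed (use mean_bound \<delta> in auto)
  then show "\<bar>cov_n psi_mult N t k l\<bar> \<le> g" using Ng by linarith
qed

theorem mainTheorem7:
  fixes t :: real and k l :: nat
  assumes "t > 0" and "k \<noteq> l"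
  shows "(\<lambda>N. mean_n psi_mult N t k) \<longlonglongrightarrow> 0
    \<and> (\<lambda>N. var_n psi_mult N t k) \<longlonglongrightarrow> 0
    \<and> (\<lambda>N. cov_n psi_mult N t k l) \<longlonglongrightarrow> 0
    \<and> (\<lambda>N. mean_n psi_mult N t N) \<longlonglongrightarrow> 1
    \<and> (\<lambda>N. p_coag psi_mult N t) \<longlonglongrightarrow> 1"
proof -
  define g where "g = (\<lambda>N::nat. real N ^ 3 * exp (- real N * t))"
  have g_lim: "g \<longlonglongrightarrow> 0" unfolding g_def using assms(1) by real_asymp
  have large: "eventually (\<lambda>N. Suc (max k l) \<le> N) sequentially" by (rule eventually_ge_at_top)
  have null: "f \<longlonglongrightarrow> 0" if "\<And>N. Suc (max k l) \<le> N \<Longrightarrow> \<bar>f N\<bar> \<le> g N" for f :: "nat \<Rightarrow> real"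
  proof (rule tendsto_0_le[OF g_lim])
    show "eventually (\<lambda>N. norm (f N) \<le> norm (g N) * 1) sequentially"
      using large by eventually_elim (use that in \<open>auto simp: g_def\<close>)
  qed
  note bound = cluster_statistics_bound[OF _ _ _ less_imp_le[OF assms(1)]]
  have mean: "(\<lambda>N. mean_n psi_mult N t k) \<longlonglongrightarrow> 0"
    by (rule null, unfold g_def, rule bound(1)[of _ k l]) auto
  have var: "(\<lambda>N. var_n psi_mult N t k) \<longlonglongrightarrow> 0"
    unfolding var_n_def by (rule null, unfold g_def, rule bound(2)[of _ k k]) auto
  have cov: "(\<lambda>N. cov_n psi_mult N t k l) \<longlonglongrightarrow> 0"
    by (rule null, unfold g_def, rule bound(2)[of _ k l]) auto
  have "(\<lambda>N. p_coag psi_mult N t - 1) \<longlonglongrightarrow> 0"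
    by (rule null, unfold g_def, rule bound(3)[of _ k l]) auto
  then have coag: "(\<lambda>N. p_coag psi_mult N t) \<longlonglongrightarrow> 1" by (simp add: LIM_zero_iff)
  have "(\<lambda>N. mean_n psi_mult N t N) \<longlonglongrightarrow> 1"
    by (rule Lim_transform_eventually[OF coag]) (auto intro: eventually_mono[OF large] simp: mean_top_size)
  then show ?thesis using mean var cov coag by blast
qed

end
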